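(* Let $\mathfrak{g}$, $P$, $QT_{\mathfrak{g}}$ and $\tau_\pm$ be as in the context, and for $\gamma\in SL(2,\mathbb{Z})$ let $A_\gamma$ denote the corresponding automorphism of $QT_{\mathfrak{g}}$ generated by $\tau_\pm$ (with the composition convention of the context). If $\gamma=\begin{pmatrix} b & a\\ p & r\end{pmatrix}\in SL(2,\mathbb{Z})$, then for all $\lambda,\mu\in P$, $$A_\gamma(Y^\lambda X^\mu)=q^{-2(\mu,\mu)ab-4(\mu,\lambda)ap-2(\lambda,\lambda)pr}\,Y^{r\lambda+a\mu}X^{p\lambda+b\mu}.$$
   Context: $\mathbb{C}_q$ denotes the algebraic closure of $\mathbb{C}((q))$. Let $\mathfrak{g}$ be simply laced with invariant bilinear form $(\cdot,\cdot)$, fundamental weights $w_1,\dots,w_r$ and weight lattice $P=\bigoplus_i\mathbb{Z}w_i$; the coweight lattice $P^\vee$ is identified with $P$ via $(\cdot,\cdot)$. $QT_{\mathfrak{g}}$ is the $\mathbb{C}_q$-algebra generated by $X^\mu,Y^\lambda$ ($\mu,\lambda\in P$) with $X^\mu X^{\mu'}=X^{\mu+\mu'}$, $Y^\lambda Y^{\lambda'}=Y^{\lambda+\lambda'}$, $X^0=Y^0=1$, $X^\mu Y^\lambda=q^{-4(\mu,\lambda)}Y^\lambda X^\mu$. Writing $X_i=X^{w_i}$, $Y_i=Y^{w_i}$, the automorphism $\tau_+$ is determined by $\tau_+(X_i)=q^{-2(w_i,w_i)}Y_iX_i$, $\tau_+(Y^\lambda)=Y^\lambda$, and $\tau_-$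 by $\tau_-(X^\mu)=X^\mu$, $\tau_-(Y_i)=q^{2(w_i,w_i)}X_iY_i$. Set $T_+=\begin{pmatrix}1&1\\0&1\end{pmatrix}$, $T_-=\begin{pmatrix}1&0\\1&1\end{pmatrix}$, $A_{T_\pm}=\tau_\pm$, $A_{T_\pm^{-1}}=\tau_\pm^{-1}$; for $\gamma=M_1M_2\cdots M_k$ with each $M_j\in\{T_\pm^{\pm1}\}$, $A_\gamma:=A_{M_k}\circ\cdots\circ A_{M_1}$. *)

theory Defs
  imports "HOL-Library.Poly_Mapping" "HOL-Library.Function_Algebras"
          "HOL-Computational_Algebra.Formal_Laurent_Series"
          "HOL-Algebra.Algebraic_Closure_Type"
begin

type_synonym Cq = "complex fls alg_closure"

definition q_var :: Cq where "q_var = to_ac fls_X"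

text \<open>A coherent choice of rational powers of q in Cq:
  qp x plays the role of q to the power x (x rational).\<close>
definition qpow_system :: "(rat \<Rightarrow> Cq) \<Rightarrow> bool" where
  "qpow_system qp \<longleftrightarrow> (\<forall>x y. qp (x + y) = qp x * qp y) \<and> qp 1 = q_var"

definition simply_laced_cartan :: "('n::finite \<Rightarrow> 'n \<Rightarrow> int) \<Rightarrow> bool" where
  "simply_laced_cartan C \<longleftrightarrow>
     (\<forall>i. C i i = 2) \<and> (\<forall>i j. i \<noteq> j \<longrightarrow> C i j \<in> {0, -1}) \<and>
     (\<forall>i j. C i j = C j i) \<and>
     (\<forall>v :: 'n \<Rightarrow> int. v \<noteq> 0 \<longrightarrow> (\<Sum>i. \<Sum>j. v i * C i j * v j) > 0)"

text \<open>B i j = (w_i, w_j): the Gram matrix of the fundamental weights, i.e.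
  the inverse Cartan matrix (normalization (alpha,alpha) = 2).\<close>
definition inverse_cartan :: "('n::finite \<Rightarrow> 'n \<Rightarrow> int) \<Rightarrow> ('n \<Rightarrow> 'n \<Rightarrow> rat) \<Rightarrow> bool" where
  "inverse_cartan C B \<longleftrightarrow>
     (\<forall>i j. (\<Sum>k. of_int (C i k) * B k j) = (if i = j then 1 else 0))"

text \<open>Weights in P are integer coordinate vectors w.r.t. the fundamental weights.\<close>
definition wform :: "('n::finite \<Rightarrow> 'n \<Rightarrow> rat) \<Rightarrow> ('n \<Rightarrow> int) \<Rightarrow> ('n \<Rightarrow> int) \<Rightarrow> rat" where
  "wform B lam mu = (\<Sum>i. \<Sum>j. of_int (lam i) * of_int (mu j) * B i j)"

definition fund_weight :: "'n \<Rightarrow> ('n \<Rightarrow> int)" where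
  "fund_weight i = (\<lambda>j. if j = i then 1 else 0)"

type_synonym 'n qt = "(('n \<Rightarrow> int) \<times> ('n \<Rightarrow> int)) \<Rightarrow>\<^sub>0 Cq"

text \<open>qt_mono lam mu is the monomial Y^lam X^mu.\<close>
definition qt_mono :: "('n \<Rightarrow> int) \<Rightarrow> ('n \<Rightarrow> int) \<Rightarrow> 'n qt" where
  "qt_mono lam mu = Poly_Mapping.single (lam, mu) 1"

definition qt_X :: "('n \<Rightarrow> int) \<Rightarrow> 'n qt" where "qt_X mu = qt_mono 0 mu"
definition qt_Y :: "('n \<Rightarrow> int) \<Rightarrow> 'n qt" where "qt_Y lam = qt_mono lam 0"
definition qt_one :: "'n qt" where "qt_one = qt_mono 0 0"

definition qt_smult :: "Cq \<Rightarrow> 'n qt \<Rightarrow> 'n qt" where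
  "qt_smult c x = Poly_Mapping.map (\<lambda>v. c * v) x"

text \<open>Multiplication: (Y^l1 X^m1)(Y^l2 X^m2) = q^(-4(m1,l2)) Y^(l1+l2) X^(m1+m2),
  from X^mu Y^lam = q^(-4(mu,lam)) Y^lam X^mu.\<close>
definition qt_mul :: "(rat \<Rightarrow> Cq) \<Rightarrow> ('n::finite \<Rightarrow> 'n \<Rightarrow> rat) \<Rightarrow> 'n qt \<Rightarrow> 'n qt \<Rightarrow> 'n qt" where
  "qt_mul qp B x y =
     (\<Sum>u\<in>Poly_Mapping.keys x. \<Sum>v\<in>Poly_Mapping.keys y.
        Poly_Mapping.single (fst u + fst v, snd u + snd v)
          (Poly_Mapping.lookup x u * Poly_Mapping.lookup y v * qp (-4 * wform B (snd u) (fst v))))"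

definition is_qt_alg_hom :: "(rat \<Rightarrow> Cq) \<Rightarrow> ('n::finite \<Rightarrow> 'n \<Rightarrow> rat) \<Rightarrow> ('n qt \<Rightarrow> 'n qt) \<Rightarrow> bool" where
  "is_qt_alg_hom qp B f \<longleftrightarrow>
     (\<forall>x y. f (x + y) = f x + f y) \<and>
     (\<forall>x y. f (qt_mul qp B x y) = qt_mul qp B (f x) (f y)) \<and>
     (\<forall>c x. f (qt_smult c x) = qt_smult c (f x)) \<and>
     f qt_one = qt_one"

definition tau_plus :: "(rat \<Rightarrow> Cq) \<Rightarrow> ('n::finite \<Rightarrow> 'n \<Rightarrow> rat) \<Rightarrow> 'n qt \<Rightarrow> 'n qt" where
  "tau_plus qp B = (THE f. is_qt_alg_hom qp B f \<and>
     (\<forall>i. f (qt_X (fund_weight i)) =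
          qt_smult (qp (-2 * wform B (fund_weight i) (fund_weight i)))
            (qt_mul qp B (qt_Y (fund_weight i)) (qt_X (fund_weight i)))) \<and>
     (\<forall>lam. f (qt_Y lam) = qt_Y lam))"

definition tau_minus :: "(rat \<Rightarrow> Cq) \<Rightarrow> ('n::finite \<Rightarrow> 'n \<Rightarrow> rat) \<Rightarrow> 'n qt \<Rightarrow> 'n qt" where
  "tau_minus qp B = (THE f. is_qt_alg_hom qp B f \<and>
     (\<forall>mu. f (qt_X mu) = qt_X mu) \<and>
     (\<forall>i. f (qt_Y (fund_weight i)) =
          qt_smult (qp (2 * wform B (fund_weight i) (fund_weight i)))
            (qt_mul qp B (qt_X (fund_weight i)) (qt_Y (fund_weight i)))))"

text \<open>2x2 integer matrices (b, a, p, r) stand for [[b, a], [p, r]].\<close>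
type_synonym mat2 = "int \<times> int \<times> int \<times> int"

fun mat2_mult :: "mat2 \<Rightarrow> mat2 \<Rightarrow> mat2" where
  "mat2_mult (b, a, p, r) (b', a', p', r') =
     (b * b' + a * p', b * a' + a * r', p * b' + r * p', p * a' + r * r')"

datatype sl2gen = Tp | Tm | Tp_inv | Tm_inv

fun gen_mat :: "sl2gen \<Rightarrow> mat2" where
  "gen_mat Tp = (1, 1, 0, 1)"
| "gen_mat Tm = (1, 0, 1, 1)"
| "gen_mat Tp_inv = (1, -1, 0, 1)"
| "gen_mat Tm_inv = (1, 0, -1, 1)"

fun word_mat :: "sl2gen list \<Rightarrow> mat2" where
  "word_mat [] = (1, 0, 0, 1)"
| "word_mat (m # ms) = mat2_mult (gen_mat m) (word_mat ms)"

fun gen_aut :: "(rat \<Rightarrow> Cq) \<Rightarrow> ('n::finite \<Rightarrow> 'n \<Rightarrow> rat) \<Rightarrow> sl2gen \<Rightarrow> 'n qt \<Rightarrow> 'n qt" where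
  "gen_aut qp B Tp = tau_plus qp B"
| "gen_aut qp B Tm = tau_minus qp B"
| "gen_aut qp B Tp_inv = inv_into UNIV (tau_plus qp B)"
| "gen_aut qp B Tm_inv = inv_into UNIV (tau_minus qp B)"

text \<open>For gamma = M_1 M_2 ... M_k: A_gamma = A_{M_k} o ... o A_{M_1}.\<close>
fun word_aut :: "(rat \<Rightarrow> Cq) \<Rightarrow> ('n::finite \<Rightarrow> 'n \<Rightarrow> rat) \<Rightarrow> sl2gen list \<Rightarrow> 'n qt \<Rightarrow> 'n qt" where
  "word_aut qp B [] = id"
| "word_aut qp B (m # ms) = word_aut qp B ms \<circ> gen_aut qp B m"

end

theory Submission
  imports Defs "HOL-Library.Product_Plus"
begin

text \<open>
  In the Weyl-ordered basis E(\<lambda>, \<mu>) = q^(-2(\<lambda>, \<mu>)) Y^\<lambda> X^\<mu> the product of the quantum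
  torus only sees the antisymmetric form \<omega>((\<lambda>, \<mu>), (\<lambda>', \<mu>')) = (\<lambda>, \<mu>') - (\<mu>, \<lambda>'):
  E(k) E(l) = q^(2 \<omega>(k, l)) E(k + l). An integer matrix acting linearly on exponent pairs
  multiplies \<omega> by its determinant, so every \<gamma> in SL(2, \<int>) gives an automorphism
  E(k) \<mapsto> E(\<gamma> k), and these automorphisms compose like the matrices. An algebra homomorphism
  is determined by its values on the X_i and Y_i, and on these \<tau>+ and \<tau>- agree with the
  automorphisms of T+ and T-. Hence A_\<gamma> permutes the E(k) along \<gamma>, which is the theorem
  written in the basis Y^\<lambda> X^\<mu>.
\<close>

lemma qpow_zero:
  assumes "qpow_system qp"
  shows "qp 0 = 1"
proof -
  have "q_var \<noteq> 0"
    unfolding q_var_def by (metis fls_X_nonzero to_ac_0 to_ac_eq_iff)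
  moreover have "qp 1 = qp 1 * qp 0"
    using assms unfolding qpow_system_def by (metis add_0_right)
  ultimately show ?thesis
    using assms by (simp add: qpow_system_def)
qed

lemma qpow_add:
  assumes "qpow_system qp"
  shows "qp (x + y) = qp x * qp y"
  using assms by (simp add: qpow_system_def)

lemma Sum_any_eq_sum_UNIV: "Sum_any (g :: 'a::finite \<Rightarrow> 'b::comm_monoid_add) = sum g UNIV"
  by (rule Sum_any.expand_superset) auto

lemma inverse_cartan_sym:
  assumes C_sym: "\<And>i j. C i j = C j i" and "inverse_cartan C B"
  shows "B i j = B j i"
proof -
  have inv: "(\<Sum>k\<in>UNIV. of_int (C i k) * B k j) = (if i = j then 1 else 0)" for i j
    using assms(2) by (simp add: inverse_cartan_def Sum_any_eq_sum_UNIV)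
  have inv': "(\<Sum>l\<in>UNIV. B l i * of_int (C l k)) = (if k = i then 1 else 0)" for i k
    using inv[of k i] by (simp only: C_sym[of k] mult.commute)
  have "B i j = (\<Sum>k\<in>UNIV. (if k = i then 1 else 0) * B k j)"
    by (simp add: if_distrib[of "\<lambda>x. x * _"] cong: if_cong)
  also have "\<dots> = (\<Sum>k\<in>UNIV. \<Sum>l\<in>UNIV. B l i * of_int (C l k) * B k j)"
    by (simp only: sum_distrib_right[symmetric] inv')
  also have "\<dots> = (\<Sum>l\<in>UNIV. B l i * (\<Sum>k\<in>UNIV. of_int (C l k) * B k j))"
    by (subst sum.swap) (simp add: sum_distrib_left mult.assoc)
  also have "\<dots> = B j i"
    by (simp add: inv if_distrib[of "\<lambda>x. _ * x"] cong: if_cong)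
  finally show ?thesis .
qed

lemma wform_eq_sum:
  "wform B x y = (\<Sum>i\<in>UNIV. \<Sum>j\<in>UNIV. of_int (x i) * of_int (y j) * B i j)"
  by (simp add: wform_def Sum_any_eq_sum_UNIV)

lemma wform_sym:
  assumes "\<And>i j. B i j = B j i"
  shows "wform B x y = wform B y x"
  unfolding wform_eq_sum by (subst sum.swap) (simp add: assms ac_simps)

lemma wform_add_left: "wform B (x + y) z = wform B x z + wform B y z"
  unfolding wform_eq_sum by (simp add: algebra_simps sum.distrib)

lemma wform_add_right: "wform B z (x + y) = wform B z x + wform B z y"
  unfolding wform_eq_sum by (simp add: algebra_simps sum.distrib)

lemma wform_lincomb_left:
  "wform B (\<lambda>i. c * x i + d * y i) z = of_int c * wform B x z + of_int d * wform B y z"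
  unfolding wform_eq_sum
  by (simp add: algebra_simps sum.distrib sum_distrib_left)

lemma wform_lincomb_right:
  "wform B z (\<lambda>i. c * x i + d * y i) = of_int c * wform B z x + of_int d * wform B z y"
  unfolding wform_eq_sum
  by (simp add: algebra_simps sum.distrib sum_distrib_left)

lemma wform_zero_left [simp]: "wform B 0 z = 0"
  and wform_zero_right [simp]: "wform B z 0 = 0"
  by (simp_all add: wform_def)

section \<open>Integer 2x2 matrices acting on exponent pairs\<close>

type_synonym 'n exponent = "('n \<Rightarrow> int) \<times> ('n \<Rightarrow> int)"

fun mat2_det :: "mat2 \<Rightarrow> int" where
  "mat2_det (b, a, p, r) = b * r - a * p"

fun mat2_adj :: "mat2 \<Rightarrow> mat2" where
  "mat2_adj (b, a, p, r) = (r, - a, - p, b)"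

text \<open>The matrix (b, a, p, r) acts on (\<lambda>, \<mu>) as its transpose on the column (\<mu>, \<lambda>), so
  products act in reverse order (mat2_act_mult), matching the composition order of word_aut.\<close>

fun mat2_act :: "mat2 \<Rightarrow> 'n exponent \<Rightarrow> 'n exponent" where
  "mat2_act (b, a, p, r) (lam, mu) = ((\<lambda>i. r * lam i + a * mu i), (\<lambda>i. p * lam i + b * mu i))"

lemma mat2_det_mult: "mat2_det (mat2_mult g h) = mat2_det g * mat2_det h"
  by (cases g; cases h) (simp add: algebra_simps)

lemma mat2_det_adj: "mat2_det (mat2_adj g) = mat2_det g"
  by (cases g) (simp add: algebra_simps)

lemma mat2_mult_adj:
  assumes "mat2_det g = 1"
  shows "mat2_mult g (mat2_adj g) = (1, 0, 0, 1)" and "mat2_mult (mat2_adj g) g = (1, 0, 0, 1)"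
  using assms by (cases g; simp add: algebra_simps)+

lemma mat2_det_gen_mat: "mat2_det (gen_mat m) = 1"
  by (cases m) simp_all

lemma mat2_det_word_mat: "mat2_det (word_mat ms) = 1"
  by (induction ms) (simp_all add: mat2_det_mult mat2_det_gen_mat)

lemma mat2_act_mult: "mat2_act (mat2_mult g h) k = mat2_act h (mat2_act g k)"
  by (cases g; cases h; cases k) (simp add: fun_eq_iff algebra_simps)

lemma mat2_act_one [simp]: "mat2_act (1, 0, 0, 1) k = k"
  by (cases k) simp

lemma mat2_act_adj:
  assumes "mat2_det g = 1"
  shows "mat2_act g (mat2_act (mat2_adj g) k) = k" and "mat2_act (mat2_adj g) (mat2_act g k) = k"
  by (simp_all add: mat2_act_mult[symmetric] mat2_mult_adj[OF assms])

lemma mat2_act_add: "mat2_act g (k + l) = mat2_act g k + mat2_act g l"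
  by (cases g; cases k; cases l) (simp add: fun_eq_iff algebra_simps)

lemma mat2_act_zero [simp]: "mat2_act g 0 = 0"
  by (cases g) (simp add: zero_prod_def fun_eq_iff)

definition exponent_form :: "('n::finite \<Rightarrow> 'n \<Rightarrow> rat) \<Rightarrow> 'n exponent \<Rightarrow> rat" where
  "exponent_form B k = wform B (fst k) (snd k)"

definition exponent_symp ::
    "('n::finite \<Rightarrow> 'n \<Rightarrow> rat) \<Rightarrow> 'n exponent \<Rightarrow> 'n exponent \<Rightarrow> rat" where
  "exponent_symp B k l = wform B (fst k) (snd l) - wform B (snd k) (fst l)"

lemma exponent_form_zero [simp]: "exponent_form B 0 = 0"
  by (simp add: exponent_form_def)

lemma exponent_symp_mat2_act:
  "exponent_symp B (mat2_act g k) (mat2_act g l) = of_int (mat2_det g) * exponent_symp B k l"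
  by (cases g; cases k; cases l)
    (simp add: exponent_symp_def wform_lincomb_left wform_lincomb_right algebra_simps)

lemma exponent_form_mat2_act:
  assumes "\<And>i j. B i j = B j i"
  shows "exponent_form B (mat2_act (b, a, p, r) (lam, mu)) =
    of_int (p * r) * wform B lam lam + of_int (r * b + a * p) * wform B lam mu
    + of_int (a * b) * wform B mu mu"
  using wform_sym[OF assms, where x = mu and y = lam]
  by (simp add: exponent_form_def wform_lincomb_left wform_lincomb_right algebra_simps)

lemma exponent_form_add:
  assumes "\<And>i j. B i j = B j i"
  shows "exponent_form B (k + l) =
    exponent_form B k + exponent_form B l + wform B (fst k) (snd l) + wform B (snd k) (fst l)"
  using wform_sym[OF assms, where x = "snd k" and y = "fst l"]
  by (simp add: exponent_form_def wform_add_left wform_add_right)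

lemma poly_mapping_induct_single [case_names zero single add]:
  fixes x :: "'a \<Rightarrow>\<^sub>0 'b::monoid_add"
  assumes "P 0" and "\<And>k c. P (Poly_Mapping.single k c)"
    and "\<And>x y. P x \<Longrightarrow> P y \<Longrightarrow> P (x + y)"
  shows "P x"
proof (induction x rule: update_induct)
  case (update f a b)
  have "Poly_Mapping.update a b f = f + Poly_Mapping.single a b"
    using update.hyps(1)
    by (intro poly_mapping_eqI) (auto simp: lookup_update lookup_add lookup_single in_keys_iff when_def)
  then show ?case
    using update.IH assms(2,3) by simp
qed (fact assms(1))

lemma lookup_qt_smult: "Poly_Mapping.lookup (qt_smult c x) k = c * Poly_Mapping.lookup x k"
  unfolding qt_smult_def by (simp add: Poly_Mapping.map.rep_eq when_def)

lemma qt_smult_single: "qt_smult c (Poly_Mapping.single k d) = Poly_Mapping.single k (c * d)"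
  by (rule poly_mapping_eqI) (simp add: lookup_qt_smult lookup_single when_def)

lemma qt_one_eq_single: "qt_one = Poly_Mapping.single 0 1"
  by (simp add: qt_one_def qt_mono_def zero_prod_def del: single_one)

lemma qt_mul_superset:
  assumes "finite S" "Poly_Mapping.keys x \<subseteq> S" "finite T" "Poly_Mapping.keys y \<subseteq> T"
  shows "qt_mul qp B x y = (\<Sum>u\<in>S. \<Sum>v\<in>T.
        Poly_Mapping.single (fst u + fst v, snd u + snd v)
          (Poly_Mapping.lookup x u * Poly_Mapping.lookup y v * qp (-4 * wform B (snd u) (fst v))))"
proof -
  let ?F = "\<lambda>u v. Poly_Mapping.single (fst u + fst v, snd u + snd v)
    (Poly_Mapping.lookup x u * Poly_Mapping.lookup y v * qp (-4 * wform B (snd u) (fst v)))"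
  have "(\<Sum>v\<in>Poly_Mapping.keys y. ?F u v) = (\<Sum>v\<in>T. ?F u v)" for u
    using assms by (intro sum.mono_neutral_left) (auto simp: in_keys_iff)
  then have "qt_mul qp B x y = (\<Sum>u\<in>Poly_Mapping.keys x. \<Sum>v\<in>T. ?F u v)"
    by (simp add: qt_mul_def)
  also have "\<dots> = (\<Sum>u\<in>S. \<Sum>v\<in>T. ?F u v)"
    using assms by (intro sum.mono_neutral_left) (auto simp: in_keys_iff)
  finally show ?thesis .
qed

lemma qt_mul_add_left: "qt_mul qp B (x + x') y = qt_mul qp B x y + qt_mul qp B x' y"
proof -
  let ?S = "Poly_Mapping.keys x \<union> Poly_Mapping.keys x'" and ?T = "Poly_Mapping.keys y"
  show ?thesis
    using qt_mul_superset[of ?S "x + x'" ?T y] qt_mul_superset[of ?S x ?T y]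
      qt_mul_superset[of ?S x' ?T y] keys_add[of x x']
    by (simp add: lookup_add distrib_right single_add sum.distrib)
qed

lemma qt_mul_add_right: "qt_mul qp B y (x + x') = qt_mul qp B y x + qt_mul qp B y x'"
proof -
  let ?S = "Poly_Mapping.keys y" and ?T = "Poly_Mapping.keys x \<union> Poly_Mapping.keys x'"
  show ?thesis
    using qt_mul_superset[of ?S y ?T "x + x'"] qt_mul_superset[of ?S y ?T x]
      qt_mul_superset[of ?S y ?T x'] keys_add[of x x']
    by (simp add: lookup_add distrib_left distrib_right single_add sum.distrib)
qed

lemma qt_mul_zero [simp]: "qt_mul qp B 0 y = 0" "qt_mul qp B y 0 = 0"
  by (simp_all add: qt_mul_def)

lemma qt_mul_single:
  "qt_mul qp B (Poly_Mapping.single u c) (Poly_Mapping.single v d) =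
   Poly_Mapping.single (u + v) (c * d * qp (-4 * wform B (snd u) (fst v)))"
  unfolding qt_mul_def by (cases "c = 0"; cases "d = 0") (simp_all add: plus_prod_def)

lemma qt_hom_add: "is_qt_alg_hom qp B f \<Longrightarrow> f (x + y) = f x + f y"
  and qt_hom_mul: "is_qt_alg_hom qp B f \<Longrightarrow> f (qt_mul qp B x y) = qt_mul qp B (f x) (f y)"
  and qt_hom_smult: "is_qt_alg_hom qp B f \<Longrightarrow> f (qt_smult c x) = qt_smult c (f x)"
  and qt_hom_one: "is_qt_alg_hom qp B f \<Longrightarrow> f qt_one = qt_one"
  by (simp_all add: is_qt_alg_hom_def)

lemma qt_hom_zero: "is_qt_alg_hom qp B f \<Longrightarrow> f 0 = 0"
  using qt_hom_add[of qp B f 0 0] by simp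

lemma fund_weights_generate:
  fixes S :: "('n::finite \<Rightarrow> int) set"
  assumes zero: "0 \<in> S" and add: "\<And>x y. x \<in> S \<Longrightarrow> y \<in> S \<Longrightarrow> x + y \<in> S"
    and neg: "\<And>x. x \<in> S \<Longrightarrow> - x \<in> S" and fund: "\<And>i. fund_weight i \<in> S"
  shows "m \<in> S"
proof -
  have multiple: "(\<lambda>j. c * fund_weight i j) \<in> S" for c i
  proof (induction c rule: int_induct[where k = 0])
    case base
    then show ?case using zero by (simp add: zero_fun_def)
  next
    case (step1 c)
    have "(\<lambda>j. (c + 1) * fund_weight i j) = (\<lambda>j. c * fund_weight i j) + fund_weight i"
      by (simp add: fun_eq_iff algebra_simps)
    then show ?case using step1 add fund by metis
  next
    case (step2 c)
    have "(\<lambda>j. (c - 1) * fund_weight i j) = (\<lambda>j. c * fund_weight i j) + - fund_weight i"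
      by (simp add: fun_eq_iff algebra_simps)
    then show ?case using step2 add neg fund by metis
  qed
  have "(\<lambda>j. \<Sum>i\<in>A. m i * fund_weight i j) \<in> S" for A
  proof (induction A rule: infinite_finite_induct)
    case (insert i A)
    then have "(\<lambda>j. \<Sum>i\<in>insert i A. m i * fund_weight i j) =
        (\<lambda>j. m i * fund_weight i j) + (\<lambda>j. \<Sum>i\<in>A. m i * fund_weight i j)"
      by (simp add: fun_eq_iff)
    then show ?case using insert add multiple by metis
  qed (simp_all add: zero[unfolded zero_fun_def])
  moreover have "(\<lambda>j. \<Sum>i\<in>UNIV. m i * fund_weight i j) = m"
    by (simp add: fun_eq_iff fund_weight_def if_distrib[of "\<lambda>x. _ * x"] cong: if_cong)
  ultimately show ?thesis by metis
qed

context
  fixes qp :: "rat \<Rightarrow> Cq" and B :: "'n::finite \<Rightarrow> 'n \<Rightarrow> rat"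
  assumes qp: "qpow_system qp"
begin

lemma qt_mul_assoc: "qt_mul qp B (qt_mul qp B x y) z = qt_mul qp B x (qt_mul qp B y z)"
proof (induction x rule: poly_mapping_induct_single)
  case (single u a)
  show ?case
  proof (induction y rule: poly_mapping_induct_single)
    case (single v b)
    show ?case
    proof (induction z rule: poly_mapping_induct_single)
      case (single w c)
      have "qp (-4 * wform B (snd u) (fst v)) * qp (-4 * wform B (snd u + snd v) (fst w)) =
        qp (-4 * wform B (snd v) (fst w)) * qp (-4 * wform B (snd u) (fst v + fst w))"
        by (simp add: qpow_add[OF qp, symmetric] wform_add_left wform_add_right algebra_simps)
      then show ?case
        by (simp add: qt_mul_single add.assoc ac_simps)
    qed (simp_all add: qt_mul_add_right)
  qed (simp_all add: qt_mul_add_left qt_mul_add_right)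
qed (simp_all add: qt_mul_add_left)

lemma qt_mul_one_left: "qt_mul qp B qt_one x = x"
  and qt_mul_one_right: "qt_mul qp B x qt_one = x"
  by (induction x rule: poly_mapping_induct_single)
    (simp_all add: qt_one_eq_single qt_mul_single qpow_zero[OF qp] qt_mul_add_left qt_mul_add_right
      del: single_one)

lemma qt_hom_eq_on_group_like:
  fixes G :: "('n \<Rightarrow> int) \<Rightarrow> 'n qt"
  assumes f: "is_qt_alg_hom qp B f" and g: "is_qt_alg_hom qp B g"
    and G_add: "\<And>a b. qt_mul qp B (G a) (G b) = G (a + b)" and G_zero: "G 0 = qt_one"
    and agree: "\<And>i. f (G (fund_weight i)) = g (G (fund_weight i))"
  shows "f (G m) = g (G m)"
proof (rule fund_weights_generate[of "{m. f (G m) = g (G m)}", simplified])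
  show "f (G 0) = g (G 0)"
    by (simp add: G_zero qt_hom_one[OF f] qt_hom_one[OF g])
  show "f (G (x + y)) = g (G (x + y))" if "f (G x) = g (G x)" "f (G y) = g (G y)" for x y
    using that by (simp add: G_add[symmetric] qt_hom_mul[OF f] qt_hom_mul[OF g])
  show "f (G (fund_weight i)) = g (G (fund_weight i))" for i
    by (rule agree)
  show "f (G (- w)) = g (G (- w))" if w: "f (G w) = g (G w)" for w
  proof -
    txt \<open>f (G (-w)) is a left and g (G (-w)) a right inverse of f (G w) = g (G w).\<close>
    let ?mul = "qt_mul qp B" and ?n = "G (- w)"
    have "f ?n = ?mul (f ?n) (g (?mul (G w) ?n))"
      by (simp add: G_add G_zero qt_hom_one[OF g] qt_mul_one_right)
    also have "\<dots> = ?mul (f (?mul ?n (G w))) (g ?n)"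
      by (simp add: qt_hom_mul[OF f] qt_hom_mul[OF g] qt_mul_assoc w)
    also have "\<dots> = g ?n"
      by (simp add: G_add G_zero qt_hom_one[OF f] qt_mul_one_left)
    finally show ?thesis .
  qed
qed

lemma qt_hom_eqI:
  assumes f: "is_qt_alg_hom qp B f" and g: "is_qt_alg_hom qp B g"
    and X: "\<And>i. f (qt_X (fund_weight i)) = g (qt_X (fund_weight i))"
    and Y: "\<And>i. f (qt_Y (fund_weight i)) = g (qt_Y (fund_weight i))"
  shows "f = g"
proof
  have on_X: "f (qt_X m) = g (qt_X m)" for m
    by (rule qt_hom_eq_on_group_like[where G = qt_X, OF f g _ _ X])
      (simp_all add: qt_X_def qt_one_def qt_mono_def qt_mul_single qpow_zero[OF qp])
  have on_Y: "f (qt_Y m) = g (qt_Y m)" for m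
    by (rule qt_hom_eq_on_group_like[where G = qt_Y, OF f g _ _ Y])
      (simp_all add: qt_Y_def qt_one_def qt_mono_def qt_mul_single qpow_zero[OF qp])
  have "Poly_Mapping.single k c = qt_smult c (qt_mul qp B (qt_Y (fst k)) (qt_X (snd k)))" for k c
    by (simp add: qt_X_def qt_Y_def qt_mono_def qt_mul_single qpow_zero[OF qp] qt_smult_single)
  then have on_single: "f (Poly_Mapping.single k c) = g (Poly_Mapping.single k c)" for k c
    by (simp add: qt_hom_mul[OF f] qt_hom_smult[OF f] qt_hom_mul[OF g] qt_hom_smult[OF g] on_X on_Y)
  show "f x = g x" for x
    by (induction x rule: poly_mapping_induct_single)
      (simp_all add: qt_hom_zero[OF f] qt_hom_zero[OF g] qt_hom_add[OF f] qt_hom_add[OF g] on_single)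
qed

end

section \<open>SL(2,Z) acting on Weyl-ordered monomials\<close>

definition weyl_monomial ::
    "(rat \<Rightarrow> Cq) \<Rightarrow> ('n::finite \<Rightarrow> 'n \<Rightarrow> rat) \<Rightarrow> 'n exponent \<Rightarrow> Cq \<Rightarrow> 'n qt" where
  "weyl_monomial qp B k c = Poly_Mapping.single k (c * qp (-2 * exponent_form B k))"

text \<open>Only meaningful for det g = 1, when mat2_adj g inverts g and the support stays finite.\<close>

definition sl2_act ::
    "(rat \<Rightarrow> Cq) \<Rightarrow> ('n::finite \<Rightarrow> 'n \<Rightarrow> rat) \<Rightarrow> mat2 \<Rightarrow> 'n qt \<Rightarrow> 'n qt" where
  "sl2_act qp B g x = Abs_poly_mapping (\<lambda>k.
     qp (2 * exponent_form B (mat2_act (mat2_adj g) k) - 2 * exponent_form B k)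
     * Poly_Mapping.lookup x (mat2_act (mat2_adj g) k))"

lemma lookup_sl2_act:
  assumes "mat2_det g = 1"
  shows "Poly_Mapping.lookup (sl2_act qp B g x) k =
    qp (2 * exponent_form B (mat2_act (mat2_adj g) k) - 2 * exponent_form B k)
    * Poly_Mapping.lookup x (mat2_act (mat2_adj g) k)"
proof -
  have "inj (mat2_act (mat2_adj g))"
    by (metis injI mat2_act_adj(1)[OF assms])
  with finite_keys have "finite (mat2_act (mat2_adj g) -` Poly_Mapping.keys x)"
    by (rule finite_vimageI)
  then have "finite {k. qp (2 * exponent_form B (mat2_act (mat2_adj g) k) - 2 * exponent_form B k)
      * Poly_Mapping.lookup x (mat2_act (mat2_adj g) k) \<noteq> 0}"
    by (rule rev_finite_subset) (auto simp: in_keys_iff)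
  then show ?thesis
    by (simp add: sl2_act_def)
qed

lemma sl2_act_single:
  assumes "mat2_det g = 1"
  shows "sl2_act qp B g (Poly_Mapping.single k c) =
    Poly_Mapping.single (mat2_act g k)
      (qp (2 * exponent_form B k - 2 * exponent_form B (mat2_act g k)) * c)"
proof -
  have preimage: "k = mat2_act (mat2_adj g) k' \<longleftrightarrow> mat2_act g k = k'" for k'
    using mat2_act_adj[OF assms] by metis
  show ?thesis
    by (intro poly_mapping_eqI)
      (simp add: lookup_sl2_act[OF assms] lookup_single when_def preimage;
       metis mat2_act_adj(2)[OF assms])
qed

lemma sl2_act_add:
  "mat2_det g = 1 \<Longrightarrow> sl2_act qp B g (x + y) = sl2_act qp B g x + sl2_act qp B g y"
  by (rule poly_mapping_eqI) (simp add: lookup_sl2_act lookup_add distrib_left)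

lemma sl2_act_zero [simp]: "mat2_det g = 1 \<Longrightarrow> sl2_act qp B g 0 = 0"
  by (rule poly_mapping_eqI) (simp add: lookup_sl2_act)

lemma sl2_act_smult:
  "mat2_det g = 1 \<Longrightarrow> sl2_act qp B g (qt_smult c x) = qt_smult c (sl2_act qp B g x)"
  by (rule poly_mapping_eqI) (simp add: lookup_sl2_act lookup_qt_smult ac_simps)

context
  fixes qp :: "rat \<Rightarrow> Cq" and B :: "'n::finite \<Rightarrow> 'n \<Rightarrow> rat"
  assumes qp: "qpow_system qp"
begin

lemma single_eq_weyl_monomial:
  "Poly_Mapping.single k c = weyl_monomial qp B k (c * qp (2 * exponent_form B k))"
  by (simp add: weyl_monomial_def mult.assoc qpow_add[OF qp, symmetric] qpow_zero[OF qp])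

lemma sl2_act_weyl_monomial:
  assumes "mat2_det g = 1"
  shows "sl2_act qp B g (weyl_monomial qp B k c) = weyl_monomial qp B (mat2_act g k) c"
  by (simp add: weyl_monomial_def sl2_act_single[OF assms] mult.left_commute[of _ c]
      qpow_add[OF qp, symmetric])

lemma sl2_act_mat2_mult:
  assumes "mat2_det g = 1" "mat2_det h = 1"
  shows "sl2_act qp B h (sl2_act qp B g x) = sl2_act qp B (mat2_mult g h) x"
proof (induction x rule: poly_mapping_induct_single)
  case (single k c)
  show ?case
    by (simp add: single_eq_weyl_monomial sl2_act_weyl_monomial assms mat2_det_mult mat2_act_mult)
qed (simp_all add: sl2_act_add assms mat2_det_mult)

lemma sl2_act_id: "sl2_act qp B (1, 0, 0, 1) x = x"
  by (rule poly_mapping_eqI) (simp add: lookup_sl2_act qpow_zero[OF qp])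

lemma inv_sl2_act:
  assumes "mat2_det g = 1"
  shows "inv_into UNIV (sl2_act qp B g) = sl2_act qp B (mat2_adj g)"
proof
  have left: "sl2_act qp B (mat2_adj g) (sl2_act qp B g x) = x" for x
    by (simp add: sl2_act_mat2_mult assms mat2_det_adj mat2_mult_adj sl2_act_id)
  have right: "sl2_act qp B g (sl2_act qp B (mat2_adj g) x) = x" for x
    by (simp add: sl2_act_mat2_mult assms mat2_det_adj mat2_mult_adj sl2_act_id)
  have "inj (sl2_act qp B g)"
    by (rule inj_on_inverseI[of _ "sl2_act qp B (mat2_adj g)"]) (rule left)
  then show "inv_into UNIV (sl2_act qp B g) y = sl2_act qp B (mat2_adj g) y" for y
    by (rule inv_into_f_eq) (simp_all add: right)
qed

context
  assumes B_sym: "\<And>i j. B i j = B j i"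
begin

lemma weyl_monomial_mult:
  "qt_mul qp B (weyl_monomial qp B k c) (weyl_monomial qp B l d) =
   weyl_monomial qp B (k + l) (c * d * qp (2 * exponent_symp B k l))"
proof -
  have "qp (-2 * exponent_form B k) * qp (-2 * exponent_form B l) * qp (-4 * wform B (snd k) (fst l)) =
      qp (2 * exponent_symp B k l) * qp (-2 * exponent_form B (k + l))"
    by (simp add: qpow_add[OF qp, symmetric] exponent_form_add[OF B_sym] exponent_symp_def algebra_simps)
  then show ?thesis
    by (simp add: weyl_monomial_def qt_mul_single ac_simps)
qed

lemma sl2_act_mult:
  assumes "mat2_det g = 1"
  shows "sl2_act qp B g (qt_mul qp B x y) = qt_mul qp B (sl2_act qp B g x) (sl2_act qp B g y)"
proof (induction x rule: poly_mapping_induct_single)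
  case (single k c)
  show ?case
  proof (induction y rule: poly_mapping_induct_single)
    case (single l d)
    show ?case
      unfolding single_eq_weyl_monomial[of k] single_eq_weyl_monomial[of l]
      by (simp add: weyl_monomial_mult sl2_act_weyl_monomial assms mat2_act_add exponent_symp_mat2_act)
  qed (simp_all add: qt_mul_add_right sl2_act_add assms)
qed (simp_all add: qt_mul_add_left sl2_act_add assms)

lemma is_qt_alg_hom_sl2_act:
  assumes "mat2_det g = 1"
  shows "is_qt_alg_hom qp B (sl2_act qp B g)"
  unfolding is_qt_alg_hom_def
  using assms sl2_act_single[OF assms, of qp B 0 1]
  by (simp add: sl2_act_add sl2_act_mult sl2_act_smult qt_one_eq_single qpow_zero[OF qp] del: single_one)

lemma tau_plus_eq_sl2_act: "tau_plus qp B = sl2_act qp B (1, 1, 0, 1)"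
proof -
  let ?A = "sl2_act qp B (1, 1, 0, 1)"
  have hom: "is_qt_alg_hom qp B ?A"
    by (rule is_qt_alg_hom_sl2_act) simp
  have X: "?A (qt_X (fund_weight i)) =
      qt_smult (qp (-2 * wform B (fund_weight i) (fund_weight i)))
        (qt_mul qp B (qt_Y (fund_weight i)) (qt_X (fund_weight i)))" for i
    by (simp add: qt_X_def qt_Y_def qt_mono_def sl2_act_single qt_mul_single qt_smult_single
        exponent_form_def qpow_zero[OF qp])
  have Y: "?A (qt_Y lam) = qt_Y lam" for lam
    by (simp add: qt_Y_def qt_mono_def sl2_act_single exponent_form_def qpow_zero[OF qp]
        zero_fun_def[symmetric])
  show ?thesis
    unfolding tau_plus_def
    by (rule the_equality) (use hom X Y in \<open>auto intro: qt_hom_eqI[OF qp _ hom]\<close>)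
qed

lemma tau_minus_eq_sl2_act: "tau_minus qp B = sl2_act qp B (1, 0, 1, 1)"
proof -
  let ?A = "sl2_act qp B (1, 0, 1, 1)"
  have hom: "is_qt_alg_hom qp B ?A"
    by (rule is_qt_alg_hom_sl2_act) simp
  have X: "?A (qt_X mu) = qt_X mu" for mu
    by (simp add: qt_X_def qt_mono_def sl2_act_single exponent_form_def qpow_zero[OF qp]
        zero_fun_def[symmetric])
  have Y: "?A (qt_Y (fund_weight i)) =
      qt_smult (qp (2 * wform B (fund_weight i) (fund_weight i)))
        (qt_mul qp B (qt_X (fund_weight i)) (qt_Y (fund_weight i)))" for i
    by (simp add: qt_X_def qt_Y_def qt_mono_def sl2_act_single qt_mul_single qt_smult_single
        exponent_form_def qpow_add[OF qp, symmetric])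
  show ?thesis
    unfolding tau_minus_def
    by (rule the_equality) (use hom X Y in \<open>auto intro: qt_hom_eqI[OF qp _ hom]\<close>)
qed

lemma gen_aut_eq_sl2_act: "gen_aut qp B m = sl2_act qp B (gen_mat m)"
  by (cases m) (simp_all add: tau_plus_eq_sl2_act tau_minus_eq_sl2_act inv_sl2_act)

lemma word_aut_eq_sl2_act: "word_aut qp B ms = sl2_act qp B (word_mat ms)"
proof (induction ms)
  case Nil
  then show ?case by (simp add: fun_eq_iff sl2_act_id)
next
  case (Cons m ms)
  then show ?case
    by (simp add: fun_eq_iff gen_aut_eq_sl2_act sl2_act_mat2_mult mat2_det_gen_mat mat2_det_word_mat)
qed

end

end

theorem mainTheorem3:
  fixes C :: "'n::finite \<Rightarrow> 'n \<Rightarrow> int" and B :: "'n \<Rightarrow> 'n \<Rightarrow> rat"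
    and qp :: "rat \<Rightarrow> Cq" and ms :: "sl2gen list"
    and b a p r :: int and lam mu :: "'n \<Rightarrow> int"
  assumes "simply_laced_cartan C" and "inverse_cartan C B"
    and "qpow_system qp"
    and "b * r - a * p = 1"
    and "word_mat ms = (b, a, p, r)"
  shows "word_aut qp B ms (qt_mono lam mu) =
    qt_smult
      (qp (- 2 * wform B mu mu * of_int (a * b) - 4 * wform B mu lam * of_int (a * p)
           - 2 * wform B lam lam * of_int (p * r)))
      (qt_mono (\<lambda>i. r * lam i + a * mu i) (\<lambda>i. p * lam i + b * mu i))"
proof -
  have B_sym: "B i j = B j i" for i j
    using assms(1) by (intro inverse_cartan_sym[OF _ assms(2)]) (simp add: simply_laced_cartan_def)
  have det: "mat2_det (b, a, p, r) = 1"
    using assms(4) by simp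
  have "r * b + a * p = 1 + 2 * (a * p)"
    using assms(4) by (simp add: mult.commute)
  then have "(of_int (r * b + a * p) :: rat) = 1 + 2 * of_int (a * p)"
    by (simp only: of_int_add of_int_mult of_int_1 of_int_numeral)
  then have "2 * exponent_form B (lam, mu) - 2 * exponent_form B (mat2_act (b, a, p, r) (lam, mu)) =
      - 2 * wform B mu mu * of_int (a * b) - 4 * wform B mu lam * of_int (a * p)
      - 2 * wform B lam lam * of_int (p * r)"
    using wform_sym[OF B_sym, where x = mu and y = lam]
    by (simp only: exponent_form_mat2_act[OF B_sym]) (simp add: exponent_form_def algebra_simps)
  then show ?thesis
    using sl2_act_single[OF det, of qp B "(lam, mu)" 1]
    by (simp add: word_aut_eq_sl2_act[OF assms(3) B_sym] assms(5) qt_mono_def qt_smult_single)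
qed

end
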